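(* Let $r\ge1$, $n$ be integers and let $\sigma,\sigma':\mathbb{Z}_n\to\{0,1\}$ satisfy $\mathrm{maj}_r(\sigma)=\sigma'$. Then $b(\sigma')\le b(\sigma)$.
   Context: Cells are elements of $\mathbb{Z}_n$, arithmetic mod $n$; $[a,b]$ denotes the cyclic interval $a,\dots,b$. The majority rule with radius $r$: $\mathrm{maj}_r(\sigma)(i)=0$ if among the cells of $[i-r,i+r]$ strictly more have value $0$ than $1$ under $\sigma$, and $=1$ otherwise. For $\beta\in\{0,1\}$, $B^\beta(\sigma)$ is the set of cell intervals $[i,j]$ with $\sigma(k)=\beta$ for all $k\in[i,j]$ and $\sigma(i-1)=\sigma(j+1)=1-\beta$; $B(\sigma)=B^0(\sigma)\cup B^1(\sigma)$ and $b(\sigma)=|B(\sigma)|$. *)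

theory Defs
  imports Main
begin

text \<open>Cells are the integers 0..n-1 representing Z_n; a configuration is a
function sigma :: int => nat whose values on cells lie in {0,1}.\<close>

definition cell :: "int \<Rightarrow> (int \<Rightarrow> nat) \<Rightarrow> int \<Rightarrow> nat" where
  "cell n \<sigma> x = \<sigma> (x mod n)"

definition is_config :: "int \<Rightarrow> (int \<Rightarrow> nat) \<Rightarrow> bool" where
  "is_config n \<sigma> \<longleftrightarrow> (\<forall>i. 0 \<le> i \<and> i < n \<longrightarrow> \<sigma> i \<in> {0, 1})"

definition maj :: "int \<Rightarrow> int \<Rightarrow> (int \<Rightarrow> nat) \<Rightarrow> int \<Rightarrow> nat" where
  "maj r n \<sigma> i =
     (if card {k \<in> {-r..r}. cell n \<sigma> (i + k) = 0} > card {k \<in> {-r..r}. cell n \<sigma> (i + k) = 1}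
      then 0 else 1)"

text \<open>Cyclic interval [i,j] = i, i+1, ..., j (mod n); block of value beta.\<close>
definition blocks :: "nat \<Rightarrow> int \<Rightarrow> (int \<Rightarrow> nat) \<Rightarrow> (int \<times> int) set" where
  "blocks \<beta> n \<sigma> = {(i, j). 0 \<le> i \<and> i < n \<and> 0 \<le> j \<and> j < n \<and>
      (\<forall>k. 0 \<le> k \<and> k \<le> (j - i) mod n \<longrightarrow> cell n \<sigma> (i + k) = \<beta>) \<and>
      cell n \<sigma> (i - 1) = 1 - \<beta> \<and> cell n \<sigma> (j + 1) = 1 - \<beta>}"

definition num_blocks :: "int \<Rightarrow> (int \<Rightarrow> nat) \<Rightarrow> nat" where
  "num_blocks n \<sigma> = card (blocks 0 n \<sigma> \<union> blocks 1 n \<sigma>)"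

end

theory Submission
  imports Defs
begin

text \<open>A block is determined by its left end, a cell where the configuration changes value, so
  b(\<sigma>) is the number of change points of \<sigma> around the cycle. Sliding the majority window
  from i - 1 to i removes cell i - 1 - r and adds cell i + r, so the number of zeros in the
  window moves by at most one, towards the value of \<sigma>(i + r). Hence wherever the majority
  image of \<sigma> changes value at i, its new value is \<sigma>(i + r). A function that agrees with a
  second one at each of its own change points cannot change more often around the cycle than
  the second one, and the shifted configuration i \<mapsto> \<sigma>(i + r) has exactly b(\<sigma>) change
  points.\<close>

lemma card_filter_insert:
  assumes "finite A" and "a \<notin> A"
  shows "card {y \<in> insert a A. P y} = card {y \<in> A. P y} + of_bool (P a)"
proof -
  have "{y \<in> insert a A. P y} = (if P a then insert a {y \<in> A. P y} else {y \<in> A. P y})"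
    by auto
  then show ?thesis
    using assms by simp
qed

lemma card_filter_shift_periodic:
  fixes n c :: int
  assumes "n > 0" and periodic: "\<And>x. P (x mod n) = P x"
  shows "card {x \<in> {0..<n}. P (x + c)} = card {x \<in> {0..<n}. P x}"
proof -
  have "P ((y - c) mod n + c) = P y" for y
    by (metis periodic mod_add_left_eq diff_add_cancel)
  then have "bij_betw (\<lambda>x. (x + c) mod n) {x \<in> {0..<n}. P (x + c)} {x \<in> {0..<n}. P x}"
    using \<open>n > 0\<close> periodic
    by (intro bij_betw_byWitness[where f' = "\<lambda>y. (y - c) mod n"]) (auto simp: mod_simps)
  then show ?thesis
    by (rule bij_betw_same_card)
qed

definition changes :: "(int \<Rightarrow> 'a) \<Rightarrow> int set \<Rightarrow> nat" where
  "changes f A = card {x \<in> A. f (x - 1) \<noteq> f x}"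

lemma changes_insert_right:
  fixes a b :: int
  assumes "a \<le> b"
  shows "changes f {a<..b + 1} = changes f {a<..b} + of_bool (f b \<noteq> f (b + 1))"
proof -
  have "{a<..b + 1} = insert (b + 1) {a<..b}"
    using assms by auto
  then show ?thesis
    unfolding changes_def
    using card_filter_insert[of "{a<..b}" "b + 1" "\<lambda>x. f (x - 1) \<noteq> f x"] by simp
qed

text \<open>The mismatch indicator at the right end pays for every change of g that h does not follow.\<close>

lemma changes_tracking_interval:
  fixes g h :: "int \<Rightarrow> 'a" and a b :: int
  assumes tracks: "\<And>x. g (x - 1) \<noteq> g x \<Longrightarrow> h x = g x" and "a \<le> b"
  shows "changes g {a<..b} + of_bool (g b \<noteq> h b) \<le> changes h {a<..b} + of_bool (g a \<noteq> h a)"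
  using \<open>a \<le> b\<close>
proof (induction b rule: int_ge_induct)
  case base
  then show ?case
    by (simp add: changes_def)
next
  case (step b)
  have "of_bool (g b \<noteq> g (b + 1)) + of_bool (g (b + 1) \<noteq> h (b + 1))
      \<le> of_bool (g b \<noteq> h b) + (of_bool (h b \<noteq> h (b + 1)) :: nat)"
    using tracks[of "b + 1"] by (cases "g b = g (b + 1)"; cases "g b = h b") auto
  with step show ?case
    by (simp add: changes_insert_right)
qed

lemma changes_le_if_tracking_periodic:
  fixes g h :: "int \<Rightarrow> 'a" and n :: int
  assumes "\<And>x. g (x - 1) \<noteq> g x \<Longrightarrow> h x = g x" and "n > 0"
    and "\<And>x. g (x mod n) = g x" and "\<And>x. h (x mod n) = h x"
  shows "changes g {0..<n} \<le> changes h {0..<n}"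
proof -
  have "changes g {-1<..n - 1} + of_bool (g (n - 1) \<noteq> h (n - 1))
      \<le> changes h {-1<..n - 1} + of_bool (g (-1) \<noteq> h (-1))"
    using assms(1) \<open>n > 0\<close> by (intro changes_tracking_interval) auto
  moreover have "(-1) mod n = n - 1"
    using \<open>n > 0\<close> by (simp add: zmod_minus1)
  then have "g (n - 1) = g (-1)" and "h (n - 1) = h (-1)"
    using assms(3,4)[of "-1"] by simp_all
  moreover have "{-1<..n - 1} = {0..<n}"
    by auto
  ultimately show ?thesis
    by simp
qed

lemma changes_shift_periodic:
  fixes f :: "int \<Rightarrow> 'a" and n c :: int
  assumes "n > 0" and periodic: "\<And>x. f (x mod n) = f x"
  shows "changes (\<lambda>x. f (x + c)) {0..<n} = changes f {0..<n}"
proof -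
  have "f (x mod n - 1) = f (x - 1)" for x
    by (metis periodic mod_diff_left_eq)
  then show ?thesis
    unfolding changes_def
    using card_filter_shift_periodic[OF \<open>n > 0\<close>, of "\<lambda>x. f (x - 1) \<noteq> f x" c] periodic
    by (simp add: algebra_simps)
qed

definition run_ends_at :: "(int \<Rightarrow> bool) \<Rightarrow> int \<Rightarrow> bool" where
  "run_ends_at P m \<longleftrightarrow> 0 \<le> m \<and> (\<forall>k. 0 \<le> k \<and> k \<le> m \<longrightarrow> P k) \<and> \<not> P (m + 1)"

lemma run_ends_at_unique:
  assumes "run_ends_at P m" and "run_ends_at P m'"
  shows "m = m'"
proof (rule ccontr)
  assume "m \<noteq> m'"
  then show False
    using assms unfolding run_ends_at_def
    by (metis linorder_neqE_linordered_idom zless_imp_add1_zle add_increasing2 zero_le_one)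
qed

lemma ex_run_ends_at:
  fixes N :: int
  assumes "P 0" and "\<not> P N" and "0 \<le> N"
  shows "\<exists>m < N. run_ends_at P m"
proof -
  obtain k :: nat where "k < nat N" and "\<forall>i \<le> k. P (int i)" and "\<not> P (int (Suc k))"
    using ex_least_nat_less[of "\<lambda>i. \<not> P (int i)" "nat N"] assms by auto
  moreover have "P k'" if "0 \<le> k'" and "k' \<le> int k" for k'
    using \<open>\<forall>i \<le> k. P (int i)\<close> that by (metis nat_le_iff nat_0_le)
  ultimately have "int k < N" and "run_ends_at P (int k)"
    by (auto simp: run_ends_at_def add.commute)
  then show ?thesis
    by blast
qed

lemma cell_mod: "cell n \<sigma> (x mod n) = cell n \<sigma> x"
  by (simp add: cell_def)

lemma cell_mod_add: "cell n \<sigma> (x mod n + k) = cell n \<sigma> (x + k)"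
  by (metis cell_mod mod_add_left_eq)

lemma cell_in_01: "is_config n \<sigma> \<Longrightarrow> n > 0 \<Longrightarrow> cell n \<sigma> x \<in> {0, 1}"
  by (simp add: cell_def is_config_def)

lemma blocks_start_boundary:
  assumes "(i, j) \<in> blocks \<beta> n \<sigma>"
  shows "0 \<le> i \<and> i < n \<and> cell n \<sigma> i = \<beta> \<and> cell n \<sigma> (i - 1) \<noteq> cell n \<sigma> i"
proof -
  have "0 \<le> i" and "i < n" and "cell n \<sigma> (i + 0) = \<beta>" and "cell n \<sigma> (i - 1) = 1 - \<beta>"
    using assms unfolding blocks_def by auto
  then show ?thesis
    by (cases \<beta>) auto
qed

lemma blocks_run:
  assumes "(i, j) \<in> blocks \<beta> n \<sigma>"
  shows "run_ends_at (\<lambda>k. cell n \<sigma> (i + k) = \<beta>) ((j - i) mod n)"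
proof -
  have "cell n \<sigma> (i + (j - i) mod n + 1) = cell n \<sigma> (j + 1)"
    using cell_mod_add[of n \<sigma> "j - i" "i + 1"] by (simp add: algebra_simps)
  moreover have "0 \<le> (j - i) mod n"
    and "\<forall>k. 0 \<le> k \<and> k \<le> (j - i) mod n \<longrightarrow> cell n \<sigma> (i + k) = \<beta>"
    and "cell n \<sigma> (j + 1) = 1 - \<beta>"
    using assms unfolding blocks_def by auto
  ultimately show ?thesis
    unfolding run_ends_at_def by (cases \<beta>) (auto simp: add.assoc)
qed

lemma blocks_end_unique:
  assumes "(i, j) \<in> blocks \<beta> n \<sigma>" and "(i, j') \<in> blocks \<beta> n \<sigma>"
  shows "j = j'"
proof -
  have "(j - i) mod n = (j' - i) mod n"
    using run_ends_at_unique blocks_run assms by blast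
  then have "j mod n = j' mod n"
    by (metis diff_add_cancel mod_add_left_eq)
  moreover have "0 \<le> j \<and> j < n" and "0 \<le> j' \<and> j' < n"
    using assms unfolding blocks_def by auto
  ultimately show ?thesis
    by simp
qed

lemma boundary_starts_block:
  assumes "is_config n \<sigma>" and "0 \<le> i" and "i < n"
    and boundary: "cell n \<sigma> (i - 1) \<noteq> cell n \<sigma> i"
  shows "\<exists>j. (i, j) \<in> blocks (cell n \<sigma> i) n \<sigma>"
proof -
  define \<beta> where "\<beta> = cell n \<sigma> i"
  have "cell n \<sigma> (i + (n - 1)) = cell n \<sigma> (i - 1)"
    using cell_mod_add[of n \<sigma> n "i - 1"] by (simp add: algebra_simps)
  then obtain m where "m < n - 1" and run: "run_ends_at (\<lambda>k. cell n \<sigma> (i + k) = \<beta>) m"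
    using ex_run_ends_at[of "\<lambda>k. cell n \<sigma> (i + k) = \<beta>" "n - 1"] boundary assms(2,3)
    unfolding \<beta>_def by auto
  define j where "j = (i + m) mod n"
  have "(j - i) mod n = m"
    using \<open>m < n - 1\<close> run unfolding j_def run_ends_at_def by (simp add: mod_simps)
  moreover have "cell n \<sigma> (j + 1) = cell n \<sigma> (i + m + 1)"
    unfolding j_def by (simp add: cell_mod_add)
  moreover have "cell n \<sigma> x = 1 - \<beta> \<longleftrightarrow> cell n \<sigma> x \<noteq> \<beta>" for x
    using cell_in_01[OF assms(1), of x] cell_in_01[OF assms(1), of i] assms(2,3)
    unfolding \<beta>_def by auto
  ultimately have "(i, j) \<in> blocks \<beta> n \<sigma>"
    using run boundary assms(2,3) unfolding blocks_def run_ends_at_def j_def \<beta>_def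
    by (auto simp: add.assoc)
  then show ?thesis
    unfolding \<beta>_def by blast
qed

lemma num_blocks_eq_changes:
  assumes "is_config n \<sigma>"
  shows "num_blocks n \<sigma> = changes (cell n \<sigma>) {0..<n}"
proof -
  let ?B = "blocks 0 n \<sigma> \<union> blocks 1 n \<sigma>"
  have "inj_on fst ?B"
  proof (rule inj_onI)
    fix p q
    assume "p \<in> ?B" and "q \<in> ?B" and "fst p = fst q"
    then obtain i j j' \<beta> \<beta>' where p: "p = (i, j)" "(i, j) \<in> blocks \<beta> n \<sigma>"
      and q: "q = (i, j')" "(i, j') \<in> blocks \<beta>' n \<sigma>"
      by (metis Un_iff prod.collapse)
    then have "\<beta> = \<beta>'"
      using blocks_start_boundary by blast
    then show "p = q"
      using p q blocks_end_unique by blast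
  qed
  moreover have "fst ` ?B = {i \<in> {0..<n}. cell n \<sigma> (i - 1) \<noteq> cell n \<sigma> i}"
  proof (intro equalityI subsetI)
    fix i
    assume "i \<in> fst ` ?B"
    then show "i \<in> {i \<in> {0..<n}. cell n \<sigma> (i - 1) \<noteq> cell n \<sigma> i}"
      by (auto dest: blocks_start_boundary)
  next
    fix i
    assume i: "i \<in> {i \<in> {0..<n}. cell n \<sigma> (i - 1) \<noteq> cell n \<sigma> i}"
    then obtain j where "(i, j) \<in> blocks (cell n \<sigma> i) n \<sigma>"
      using boundary_starts_block[OF assms] by auto
    moreover have "cell n \<sigma> i \<in> {0, 1}"
      using cell_in_01[OF assms] i by auto
    ultimately show "i \<in> fst ` ?B"
      by (auto intro: rev_image_eqI[of "(i, j)"])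
  qed
  ultimately show ?thesis
    unfolding num_blocks_def changes_def by (metis card_image)
qed

lemma maj_mod: "maj r n \<sigma> (x mod n) = maj r n \<sigma> x"
  by (simp add: maj_def cell_mod_add)

definition window_zeros :: "int \<Rightarrow> (int \<Rightarrow> nat) \<Rightarrow> int \<Rightarrow> nat" where
  "window_zeros r f x = card {y \<in> {x - r..x + r}. f y = 0}"

lemma card_filter_window:
  fixes r x :: int
  shows "card {k \<in> {-r..r}. P (x + k)} = card {y \<in> {x - r..x + r}. P y}"
proof -
  have "{y \<in> {x - r..x + r}. P y} = (+) x ` {k \<in> {-r..r}. P (x + k)}"
  proof (intro equalityI subsetI)
    fix y
    assume "y \<in> {y \<in> {x - r..x + r}. P y}"
    then have "y - x \<in> {k \<in> {-r..r}. P (x + k)}"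
      by auto
    then show "y \<in> (+) x ` {k \<in> {-r..r}. P (x + k)}"
      by (rule rev_image_eqI) simp
  qed auto
  then show ?thesis
    by (simp add: card_image)
qed

lemma maj_eq_window_zeros:
  assumes "is_config n \<sigma>" and "n > 0" and "r \<ge> 0"
  shows "maj r n \<sigma> x = (if r < int (window_zeros r (cell n \<sigma>) x) then 0 else 1)"
proof -
  let ?zeros = "{y \<in> {x - r..x + r}. cell n \<sigma> y = 0}"
  let ?ones = "{y \<in> {x - r..x + r}. cell n \<sigma> y = 1}"
  have "finite ?zeros" and "finite ?ones"
    by (rule finite_subset[of _ "{x - r..x + r}"], auto)+
  moreover have "?zeros \<inter> ?ones = {}"
    by auto
  ultimately have "card ?zeros + card ?ones = card (?zeros \<union> ?ones)"
    by (simp add: card_Un_disjoint)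
  also have "?zeros \<union> ?ones = {x - r..x + r}"
    using cell_in_01[OF assms(1,2)] by auto
  finally have "int (card ?zeros) + int (card ?ones) = 2 * r + 1"
    using \<open>r \<ge> 0\<close> by simp
  then show ?thesis
    unfolding maj_def window_zeros_def card_filter_window[of r "\<lambda>y. cell n \<sigma> y = 0" x]
      card_filter_window[of r "\<lambda>y. cell n \<sigma> y = 1" x]
    by auto
qed

lemma window_zeros_slide:
  fixes f :: "int \<Rightarrow> nat"
  assumes "r \<ge> 0"
  shows "window_zeros r f x + of_bool (f (x - 1 - r) = 0)
    = window_zeros r f (x - 1) + of_bool (f (x + r) = 0)"
proof -
  have "{x - 1 - r..x + r} = insert (x - 1 - r) {x - r..x + r}"
    and "{x - 1 - r..x + r} = insert (x + r) {x - 1 - r..x - 1 + r}"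
    using assms by auto
  moreover have "card {y \<in> insert (x - 1 - r) {x - r..x + r}. f y = 0}
      = window_zeros r f x + of_bool (f (x - 1 - r) = 0)"
    and "card {y \<in> insert (x + r) {x - 1 - r..x - 1 + r}. f y = 0}
      = window_zeros r f (x - 1) + of_bool (f (x + r) = 0)"
    unfolding window_zeros_def by (rule card_filter_insert; simp)+
  ultimately show ?thesis
    by simp
qed

lemma maj_change_eq_cell:
  assumes "is_config n \<sigma>" and "n > 0" and "r \<ge> 0"
    and "maj r n \<sigma> (x - 1) \<noteq> maj r n \<sigma> x"
  shows "maj r n \<sigma> x = cell n \<sigma> (x + r)"
  using assms(4) window_zeros_slide[OF \<open>r \<ge> 0\<close>, of "cell n \<sigma>" x]
    maj_eq_window_zeros[OF assms(1-3)] cell_in_01[OF assms(1,2), of "x + r"]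
  by (auto simp: of_bool_def split: if_splits)

theorem claim11:
  fixes r n :: int and \<sigma> \<sigma>' :: "int \<Rightarrow> nat"
  assumes "r \<ge> 1" and "n \<ge> 1"
    and "is_config n \<sigma>" and "is_config n \<sigma>'"
    and "\<forall>i. 0 \<le> i \<and> i < n \<longrightarrow> \<sigma>' i = maj r n \<sigma> i"
  shows "num_blocks n \<sigma>' \<le> num_blocks n \<sigma>"
proof -
  have "n > 0" and "r \<ge> 0"
    using assms(1,2) by simp_all
  have "cell n \<sigma>' = maj r n \<sigma>"
  proof
    fix x
    have "cell n \<sigma>' x = maj r n \<sigma> (x mod n)"
      using assms(5) \<open>n > 0\<close> by (simp add: cell_def)
    then show "cell n \<sigma>' x = maj r n \<sigma> x"
      by (simp add: maj_mod)
  qed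
  then have "num_blocks n \<sigma>' = changes (maj r n \<sigma>) {0..<n}"
    using num_blocks_eq_changes[OF assms(4)] by simp
  also have "\<dots> \<le> changes (\<lambda>x. cell n \<sigma> (x + r)) {0..<n}"
    using maj_change_eq_cell[OF assms(3) \<open>n > 0\<close> \<open>r \<ge> 0\<close>] \<open>n > 0\<close>
    by (intro changes_le_if_tracking_periodic) (auto simp: maj_mod cell_mod_add)
  also have "\<dots> = num_blocks n \<sigma>"
    using changes_shift_periodic[OF \<open>n > 0\<close>, of "cell n \<sigma>"] num_blocks_eq_changes[OF assms(3)]
    by (simp add: cell_mod)
  finally show ?thesis .
qed

end
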